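(* Let $\Sigma$ be a finite graph and $f$ an integer-valued function on its vertices. Then there exists a finite graph $\Gamma$ containing $\Sigma$ as an induced subgraph (a motif) such that $1$ is an eigenvalue of the normalized Laplacian of $\Gamma$, with an eigenfunction coinciding with $f$ on the vertices of $\Sigma$.
   Context: For a finite simple graph without isolated vertices, write $i\sim j$ for adjacency and $n_i$ for the degree of $i$. The normalized Laplacian acts on real functions $v$ on the vertices by $\Delta v(i)=v(i)-\frac{1}{n_i}\sum_{j\sim i}v(j)$; $\lambda$ is an eigenvalue with eigenfunction $u$ if $u\not\equiv 0$ and $\frac{1}{n_i}\sum_{j\sim i}u(j)=(1-\lambda)u(i)$ for all $i$. For $\lambda=1$ this says $\sum_{j\sim i}u(j)=0$ for every vertex $i$. *)

theory Defs
  imports Main "HOL-Analysis.Analysis"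
begin

definition simple_graph :: "'v set \<Rightarrow> ('v \<Rightarrow> 'v \<Rightarrow> bool) \<Rightarrow> bool" where
  "simple_graph V E \<longleftrightarrow> finite V \<and> (\<forall>x y. E x y \<longrightarrow> x \<in> V \<and> y \<in> V)
     \<and> (\<forall>x y. E x y \<longrightarrow> E y x) \<and> (\<forall>x. \<not> E x x)"

definition no_isolated_vertices :: "'v set \<Rightarrow> ('v \<Rightarrow> 'v \<Rightarrow> bool) \<Rightarrow> bool" where
  "no_isolated_vertices V E \<longleftrightarrow> (\<forall>i\<in>V. \<exists>j\<in>V. E i j)"

definition nbrs :: "'v set \<Rightarrow> ('v \<Rightarrow> 'v \<Rightarrow> bool) \<Rightarrow> 'v \<Rightarrow> 'v set" where
  "nbrs V E i = {j \<in> V. E i j}"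

definition degree :: "'v set \<Rightarrow> ('v \<Rightarrow> 'v \<Rightarrow> bool) \<Rightarrow> 'v \<Rightarrow> nat" where
  "degree V E i = card (nbrs V E i)"

definition norm_laplacian :: "'v set \<Rightarrow> ('v \<Rightarrow> 'v \<Rightarrow> bool) \<Rightarrow> ('v \<Rightarrow> real) \<Rightarrow> 'v \<Rightarrow> real" where
  "norm_laplacian V E v i = v i - (1 / real (degree V E i)) * (\<Sum>j\<in>nbrs V E i. v j)"

definition is_eigenfunction :: "'v set \<Rightarrow> ('v \<Rightarrow> 'v \<Rightarrow> bool) \<Rightarrow> real \<Rightarrow> ('v \<Rightarrow> real) \<Rightarrow> bool" where
  "is_eigenfunction V E lam u \<longleftrightarrow> (\<exists>i\<in>V. u i \<noteq> 0) \<and> (\<forall>i\<in>V. norm_laplacian V E u i = lam * u i)"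

definition induced_embedding :: "'a set \<Rightarrow> ('a \<Rightarrow> 'a \<Rightarrow> bool) \<Rightarrow> 'b set \<Rightarrow> ('b \<Rightarrow> 'b \<Rightarrow> bool) \<Rightarrow> ('a \<Rightarrow> 'b) \<Rightarrow> bool" where
  "induced_embedding V E W F \<phi> \<longleftrightarrow> inj_on \<phi> V \<and> \<phi> ` V \<subseteq> W \<and>
     (\<forall>x\<in>V. \<forall>y\<in>V. F (\<phi> x) (\<phi> y) \<longleftrightarrow> E x y)"

end

theory Submission
  imports Defs
begin

text \<open>Give every dart (x, y) of \<Sigma> its own vertex, adjacent to x and to the reverse
  dart (y, x), and carrying the value -f(y). Then at a vertex x of \<Sigma> each neighbour y is
  cancelled by the dart (x, y), at a dart (x, y) the two neighbours carry f(x) and -f(x), and the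
  only remaining contribution f(x) is cancelled by a pendant path x - p - q with values 0, -f(x).
  A disjoint path with values 1, 0, -1 makes the eigenfunction nonzero even when f vanishes.\<close>

lemma is_eigenfunction_1I:
  assumes "\<exists>i\<in>W. u i \<noteq> 0" and "\<And>i. i \<in> W \<Longrightarrow> (\<Sum>j\<in>nbrs W F i. u j) = 0"
  shows "is_eigenfunction W F 1 u"
  using assms by (simp add: is_eigenfunction_def norm_laplacian_def)

definition relabel :: "('b \<Rightarrow> 'c) \<Rightarrow> 'b set \<Rightarrow> ('b \<Rightarrow> 'b \<Rightarrow> bool) \<Rightarrow> 'c \<Rightarrow> 'c \<Rightarrow> bool" where
  "relabel h W F i j \<longleftrightarrow> (\<exists>a\<in>W. \<exists>b\<in>W. h a = i \<and> h b = j \<and> F a b)"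

context
  fixes h :: "'b \<Rightarrow> 'c" and W :: "'b set" and F :: "'b \<Rightarrow> 'b \<Rightarrow> bool"
  assumes inj: "inj_on h W"
begin

lemma relabel_image [simp]:
  "a \<in> W \<Longrightarrow> b \<in> W \<Longrightarrow> relabel h W F (h a) (h b) \<longleftrightarrow> F a b"
  using inj unfolding relabel_def by (auto dest: inj_onD)

lemma simple_graph_relabel:
  assumes "simple_graph W F"
  shows "simple_graph (h ` W) (relabel h W F)"
proof -
  have "\<not> relabel h W F i i" for i
    using assms inj unfolding simple_graph_def relabel_def by (metis inj_onD)
  then show ?thesis
    using assms unfolding simple_graph_def relabel_def by blast
qed

lemma no_isolated_vertices_relabel:
  "no_isolated_vertices W F \<Longrightarrow> no_isolated_vertices (h ` W) (relabel h W F)"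
  unfolding no_isolated_vertices_def by fastforce

lemma nbrs_relabel:
  "a \<in> W \<Longrightarrow> nbrs (h ` W) (relabel h W F) (h a) = h ` nbrs W F a"
  unfolding nbrs_def by auto

lemma norm_laplacian_relabel:
  assumes "a \<in> W"
  shows "norm_laplacian (h ` W) (relabel h W F) (u \<circ> inv_into W h) (h a) = norm_laplacian W F u a"
proof -
  have inj_nbrs: "inj_on h (nbrs W F a)"
    using inj by (rule inj_on_subset) (auto simp: nbrs_def)
  have "(\<Sum>j\<in>nbrs (h ` W) (relabel h W F) (h a). (u \<circ> inv_into W h) j) = (\<Sum>j\<in>nbrs W F a. u j)"
    using inj inj_nbrs by (simp add: nbrs_relabel assms sum.reindex) (simp add: nbrs_def)
  moreover have "degree (h ` W) (relabel h W F) (h a) = degree W F a"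
    using inj_nbrs by (simp add: degree_def nbrs_relabel assms card_image)
  ultimately show ?thesis
    using assms inj by (simp add: norm_laplacian_def)
qed

lemma is_eigenfunction_relabel:
  assumes "is_eigenfunction W F lam u"
  shows "is_eigenfunction (h ` W) (relabel h W F) lam (u \<circ> inv_into W h)"
  using assms inj norm_laplacian_relabel unfolding is_eigenfunction_def by fastforce

lemma induced_embedding_relabel:
  assumes "induced_embedding V E W F \<phi>"
  shows "induced_embedding V E (h ` W) (relabel h W F) (h \<circ> \<phi>)"
  using assms inj unfolding induced_embedding_def
  by (auto simp: image_subset_iff intro!: comp_inj_on inj_on_subset[OF inj])

end

datatype 'a motif_vertex = Vert 'a | Dart 'a 'a | Stem 'a | Tip 'a | Path nat

fun motif_adj :: "'a set \<Rightarrow> ('a \<Rightarrow> 'a \<Rightarrow> bool) \<Rightarrow> 'a motif_vertex \<Rightarrow> 'a motif_vertex \<Rightarrow> bool" where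
  "motif_adj V E (Vert x) (Vert y) = E x y"
| "motif_adj V E (Vert x) (Dart y z) = (E y z \<and> x = y)"
| "motif_adj V E (Dart y z) (Vert x) = (E y z \<and> x = y)"
| "motif_adj V E (Dart x y) (Dart z w) = (E x y \<and> z = y \<and> w = x)"
| "motif_adj V E (Vert x) (Stem y) = (x = y \<and> x \<in> V)"
| "motif_adj V E (Stem y) (Vert x) = (x = y \<and> x \<in> V)"
| "motif_adj V E (Stem x) (Tip y) = (x = y \<and> x \<in> V)"
| "motif_adj V E (Tip y) (Stem x) = (x = y \<and> x \<in> V)"
| "motif_adj V E (Path i) (Path j) = (i = 0 \<and> j = 1 \<or> i = 1 \<and> j = 0 \<or> i = 1 \<and> j = 2 \<or> i = 2 \<and> j = 1)"
| "motif_adj V E _ _ = False"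

definition motif_vertices :: "'a set \<Rightarrow> ('a \<Rightarrow> 'a \<Rightarrow> bool) \<Rightarrow> 'a motif_vertex set" where
  "motif_vertices V E = Vert ` V \<union> case_prod Dart ` {(x, y). E x y} \<union> Stem ` V \<union> Tip ` V
     \<union> Path ` {0, 1, 2}"

fun motif_eigenfunction :: "('a \<Rightarrow> int) \<Rightarrow> 'a motif_vertex \<Rightarrow> real" where
  "motif_eigenfunction f (Vert x) = f x"
| "motif_eigenfunction f (Dart x y) = - f y"
| "motif_eigenfunction f (Stem x) = 0"
| "motif_eigenfunction f (Tip x) = - f x"
| "motif_eigenfunction f (Path i) = 1 - real i"

lemma motif_vertices_iff [simp]:
  "Vert x \<in> motif_vertices V E \<longleftrightarrow> x \<in> V"
  "Dart x y \<in> motif_vertices V E \<longleftrightarrow> E x y"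
  "Stem x \<in> motif_vertices V E \<longleftrightarrow> x \<in> V"
  "Tip x \<in> motif_vertices V E \<longleftrightarrow> x \<in> V"
  "Path k \<in> motif_vertices V E \<longleftrightarrow> k \<le> 2"
  by (auto simp: motif_vertices_def image_iff)

lemma induced_embedding_Vert: "induced_embedding V E (motif_vertices V E) (motif_adj V E) Vert"
  unfolding induced_embedding_def by (auto simp: inj_on_def)

context
  fixes V :: "'a set" and E :: "'a \<Rightarrow> 'a \<Rightarrow> bool"
  assumes graph: "simple_graph V E"
begin

lemma finite_motif_vertices: "finite (motif_vertices V E)"
proof -
  have "finite V" and "{(x, y). E x y} \<subseteq> V \<times> V"
    using graph by (auto simp: simple_graph_def)
  then have "finite {(x, y). E x y}"
    by (blast intro: finite_subset)
  with \<open>finite V\<close> show ?thesis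
    unfolding motif_vertices_def by simp
qed

lemma simple_graph_motif: "simple_graph (motif_vertices V E) (motif_adj V E)"
proof -
  have "motif_adj V E x y \<Longrightarrow> x \<in> motif_vertices V E \<and> y \<in> motif_vertices V E \<and> motif_adj V E y x"
    for x y using graph by (cases x; cases y) (auto simp: simple_graph_def)
  moreover have "\<not> motif_adj V E x x" for x
    using graph by (cases x) (auto simp: simple_graph_def)
  ultimately show ?thesis
    using finite_motif_vertices by (simp add: simple_graph_def)
qed

lemma no_isolated_vertices_motif: "no_isolated_vertices (motif_vertices V E) (motif_adj V E)"
  unfolding no_isolated_vertices_def
proof
  fix i assume i: "i \<in> motif_vertices V E"
  show "\<exists>j\<in>motif_vertices V E. motif_adj V E i j"
  proof (cases i)
    case (Vert x) with i show ?thesis by (intro bexI[of _ "Stem x"]) auto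
  next
    case (Dart x y) with i graph show ?thesis
      by (intro bexI[of _ "Vert x"]) (auto simp: simple_graph_def)
  next
    case (Stem x) with i show ?thesis by (intro bexI[of _ "Vert x"]) auto
  next
    case (Tip x) with i show ?thesis by (intro bexI[of _ "Stem x"]) auto
  next
    case (Path k) with i show ?thesis by (intro bexI[of _ "Path (if k = 1 then 0 else 1)"]) auto
  qed
qed

lemma nbrs_motif_Vert:
  "x \<in> V \<Longrightarrow> nbrs (motif_vertices V E) (motif_adj V E) (Vert x)
     = Vert ` {y \<in> V. E x y} \<union> Dart x ` {y \<in> V. E x y} \<union> {Stem x}"
  unfolding nbrs_def
  by (rule set_eqI, rename_tac j, case_tac j) (use graph in \<open>auto simp: simple_graph_def\<close>)

lemma nbrs_motif_Dart:
  "E x y \<Longrightarrow> nbrs (motif_vertices V E) (motif_adj V E) (Dart x y) = {Vert x, Dart y x}"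
  unfolding nbrs_def
  by (rule set_eqI, rename_tac j, case_tac j) (use graph in \<open>auto simp: simple_graph_def\<close>)

lemma nbrs_motif_Stem:
  "x \<in> V \<Longrightarrow> nbrs (motif_vertices V E) (motif_adj V E) (Stem x) = {Vert x, Tip x}"
  unfolding nbrs_def by (rule set_eqI, rename_tac j, case_tac j) auto

lemma nbrs_motif_Tip:
  "x \<in> V \<Longrightarrow> nbrs (motif_vertices V E) (motif_adj V E) (Tip x) = {Stem x}"
  unfolding nbrs_def by (rule set_eqI, rename_tac j, case_tac j) auto

lemma nbrs_motif_Path:
  "k \<le> 2 \<Longrightarrow> nbrs (motif_vertices V E) (motif_adj V E) (Path k)
     = (if k = 1 then {Path 0, Path 2} else {Path 1})"
  unfolding nbrs_def by (rule set_eqI, rename_tac j, case_tac j) auto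

lemma motif_nbr_sum_zero:
  assumes i: "i \<in> motif_vertices V E"
  shows "(\<Sum>j\<in>nbrs (motif_vertices V E) (motif_adj V E) i. motif_eigenfunction f j) = 0"
proof (cases i)
  case (Vert x)
  let ?N = "{y \<in> V. E x y}" and ?u = "motif_eigenfunction f"
  have N: "finite ?N" using graph by (simp add: simple_graph_def)
  have "(\<Sum>j\<in>Vert ` ?N \<union> Dart x ` ?N \<union> {Stem x}. ?u j)
      = (\<Sum>j\<in>Vert ` ?N. ?u j) + (\<Sum>j\<in>Dart x ` ?N. ?u j) + ?u (Stem x)"
    using N by (subst sum.union_disjoint; auto)+
  also have "\<dots> = 0"
    by (simp add: sum.reindex inj_on_def sum_negf)
  finally show ?thesis
    using i Vert by (simp add: nbrs_motif_Vert)
qed (use i in \<open>auto simp: nbrs_motif_Dart nbrs_motif_Stem nbrs_motif_Tip nbrs_motif_Path\<close>)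

lemma is_eigenfunction_motif:
  "is_eigenfunction (motif_vertices V E) (motif_adj V E) 1 (motif_eigenfunction f)"
proof (rule is_eigenfunction_1I)
  show "\<exists>i\<in>motif_vertices V E. motif_eigenfunction f i \<noteq> 0"
    by (intro bexI[of _ "Path 0"]) auto
qed (rule motif_nbr_sum_zero)

end

theorem theorem7:
  fixes V :: "'a set" and E :: "'a \<Rightarrow> 'a \<Rightarrow> bool" and f :: "'a \<Rightarrow> int"
  assumes "simple_graph V E"
  shows "\<exists>(W :: nat set) F \<phi> u. simple_graph W F \<and> no_isolated_vertices W F \<and>
           induced_embedding V E W F \<phi> \<and> is_eigenfunction W F 1 u \<and>
           (\<forall>x\<in>V. u (\<phi> x) = real_of_int (f x))"
proof -
  let ?W = "motif_vertices V E" and ?F = "motif_adj V E" and ?u = "motif_eigenfunction f"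
  obtain h :: "'a motif_vertex \<Rightarrow> nat" where h: "inj_on h ?W"
    using finite_imp_inj_to_nat_seg[OF finite_motif_vertices[OF assms]] by blast
  have "\<forall>x\<in>V. (?u \<circ> inv_into ?W h) ((h \<circ> Vert) x) = real_of_int (f x)"
    using h by simp
  then show ?thesis
    using simple_graph_relabel[OF h simple_graph_motif[OF assms]]
      no_isolated_vertices_relabel[OF h no_isolated_vertices_motif[OF assms]]
      induced_embedding_relabel[OF h induced_embedding_Vert]
      is_eigenfunction_relabel[OF h is_eigenfunction_motif[OF assms]]
    by blast
qed

end
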